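(* Let $\mathcal{X}$ be a finite set, $\pi$ a probability distribution on $\mathcal{X}$ with $\pi(x)>0$ for all $x$, $p>1$, $\alpha>0$, and $\mathcal{N}$ a symmetric neighborhood mapping on $\mathcal{X}$ (with $x\notin\mathcal{N}(x)$) such that every stochastic matrix $K$ with $K(x,y)>0$ iff $y\in\mathcal{N}(x)$ is irreducible, and $\max_x|\mathcal{N}(x)|\le p^\alpha$. Suppose there exist a set $\mathcal{X}^*\subset\mathcal{X}$ with $M=|\mathcal{X}^*|\ge 2$, an operator $\mathsf{T}\colon\mathcal{X}\to\mathcal{X}$ and a constant $\nu>\alpha$ such that (i) $\pi(x)=\pi(x')$ for all $x,x'\in\mathcal{X}^*$, (ii) $\mathsf{T}(x)\in\mathcal{N}(x)$ for each $x$, (iii) $\pi(\mathsf{T}(x))\ge p^\nu\pi(x)$ for each $x\notin\mathcal{X}^*$. Let $h\colon(0,\infty)\to(0,\infty)$ be a non-decreasing balancing function ($h(u)=u\,h(1/u)$ for all $u>0$). Define $Z_h(x)=\sum_{y\in\mathcal{N}(x)}h(\pi(y)/\pi(x))$, $K_h(x,y)=\mathbf{1}_{\mathcal{N}(x)}(y)h(\pi(y)/\pi(x))/Z_h(x)$, $\pi_h$ the stationary distribution of $K_h$, $\omega=\pi/\pi_h$, and $Q_h(x,y)=K_h(x,y)/\omega(x)$ for $x\ne y$, $Q_h(x,x)=-\sum_{x'\ne x}Q_h(x,x')$. If the restriction of $K_h$ to $\mathcal{X}^*$ is irreducible, then $$\mathrm{Gap}(Q_h)\ge\frac{\kappa(p,\alpha,\nu)\,h(1)}{3(Mp^{\alpha-\nu}+1)M(M-1)\,\mathbb{E}_\pi[Z_h]},\qquad\kappa(p,\alpha,\nu)=\tfrac12\{1-p^{-(\nu-\alpha)/2}\}^3.$$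 Further, for each of $h(u)=1+u$, $h(u)=\min(1,u)$, $h(u)=\sqrt u$ one has $h(1)\ge1$, and $\mathbb{E}_\pi[Z_h]\le 2p^\alpha$ if $h(u)=1+u$; $\mathbb{E}_\pi[Z_h]\le 2p^{2\alpha-\nu}+M-1$ if $h(u)=\min(1,u)$; $\mathbb{E}_\pi[Z_h]\le p^{2\alpha-\nu}+2p^{\alpha-\nu/2}+M-1$ if $h(u)=\sqrt u$.
   Context: The restriction of a transition matrix $K$ on $\mathcal{X}$ to $S\subset\mathcal{X}$ is the transition matrix $K_S$ on $S$ with $K_S(x,x')=K(x,x')$ for $x\neq x'$ and $K_S(x,x)=1-\sum_{x'\in S\setminus\{x\}}K(x,x')$. $\mathbb{E}_\pi[Z_h]=\sum_x\pi(x)Z_h(x)$. For an irreducible reversible transition rate matrix $Q$ with eigenvalues $0=\lambda_1(Q)>\lambda_2(Q)\ge\cdots$, $\mathrm{Gap}(Q)=-\lambda_2(Q)$. *)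

theory Defs
  imports "HOL-Analysis.Analysis" "HOL-Library.Multiset"
begin

text \<open>The finite state space is the finite type 'a (X = UNIV). Matrices/kernels are
  functions 'a => 'a => real.\<close>

definition stochastic :: "('a::finite \<Rightarrow> 'a \<Rightarrow> real) \<Rightarrow> bool" where
  "stochastic K \<longleftrightarrow> (\<forall>x y. K x y \<ge> 0) \<and> (\<forall>x. (\<Sum>y\<in>UNIV. K x y) = 1)"

definition irreducible_on :: "'a set \<Rightarrow> ('a \<Rightarrow> 'a \<Rightarrow> real) \<Rightarrow> bool" where
  "irreducible_on S K \<longleftrightarrow>
     (\<forall>x\<in>S. \<forall>y\<in>S. (x, y) \<in> {(a, b). a \<in> S \<and> b \<in> S \<and> K a b > 0}\<^sup>*)"

definition irreducible :: "('a \<Rightarrow> 'a \<Rightarrow> real) \<Rightarrow> bool" where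
  "irreducible K \<longleftrightarrow> irreducible_on UNIV K"

text \<open>Restriction K_S of K to S (meaningful for x, y in S).\<close>
definition restrict_kernel :: "('a \<Rightarrow> 'a \<Rightarrow> real) \<Rightarrow> 'a set \<Rightarrow> 'a \<Rightarrow> 'a \<Rightarrow> real" where
  "restrict_kernel K S x y = (if x = y then 1 - (\<Sum>x'\<in>S - {x}. K x x') else K x y)"

definition balancing :: "(real \<Rightarrow> real) \<Rightarrow> bool" where
  "balancing h \<longleftrightarrow> (\<forall>u>0. h u > 0) \<and> mono_on {0<..} h \<and> (\<forall>u>0. h u = u * h (1 / u))"

definition Zh :: "('a \<Rightarrow> real) \<Rightarrow> ('a \<Rightarrow> 'a set) \<Rightarrow> (real \<Rightarrow> real) \<Rightarrow> 'a \<Rightarrow> real" where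
  "Zh \<pi> N h x = (\<Sum>y\<in>N x. h (\<pi> y / \<pi> x))"

definition Kh :: "('a \<Rightarrow> real) \<Rightarrow> ('a \<Rightarrow> 'a set) \<Rightarrow> (real \<Rightarrow> real) \<Rightarrow> 'a \<Rightarrow> 'a \<Rightarrow> real" where
  "Kh \<pi> N h x y = (if y \<in> N x then h (\<pi> y / \<pi> x) / Zh \<pi> N h x else 0)"

definition stationary_dist :: "('a::finite \<Rightarrow> 'a \<Rightarrow> real) \<Rightarrow> 'a \<Rightarrow> real" where
  "stationary_dist K = (THE \<mu>. (\<forall>x. \<mu> x \<ge> 0) \<and> (\<Sum>x\<in>UNIV. \<mu> x) = 1 \<and>
                               (\<forall>y. (\<Sum>x\<in>UNIV. \<mu> x * K x y) = \<mu> y))"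

definition Qh :: "('a::finite \<Rightarrow> real) \<Rightarrow> ('a \<Rightarrow> 'a set) \<Rightarrow> (real \<Rightarrow> real) \<Rightarrow> 'a \<Rightarrow> 'a \<Rightarrow> real" where
  "Qh \<pi> N h x y =
     (let K = Kh \<pi> N h; \<omega> = (\<lambda>z. \<pi> z / stationary_dist K z) in
      if x \<noteq> y then K x y / \<omega> x else - (\<Sum>x'\<in>UNIV - {x}. K x x' / \<omega> x))"

definition expect :: "('a::finite \<Rightarrow> real) \<Rightarrow> ('a \<Rightarrow> real) \<Rightarrow> real" where
  "expect \<pi> f = (\<Sum>x\<in>UNIV. \<pi> x * f x)"

definition to_mat :: "('a::finite \<Rightarrow> 'a \<Rightarrow> real) \<Rightarrow> real^'a^'a" where
  "to_mat Q = (\<chi> i j. Q i j)"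

definition eig_mset :: "('a::finite \<Rightarrow> 'a \<Rightarrow> real) \<Rightarrow> real multiset" where
  "eig_mset Q = (\<Sum>c\<in>{c. \<exists>v. v \<noteq> 0 \<and> to_mat Q *v v = c *\<^sub>R v}.
                   replicate_mset (dim {v. to_mat Q *v v = c *\<^sub>R v}) c)"

definition eig_desc :: "('a::finite \<Rightarrow> 'a \<Rightarrow> real) \<Rightarrow> real list" where
  "eig_desc Q = rev (sorted_list_of_multiset (eig_mset Q))"

definition Gap :: "('a::finite \<Rightarrow> 'a \<Rightarrow> real) \<Rightarrow> real" where
  "Gap Q = - (eig_desc Q ! 1)"

definition kappa :: "real \<Rightarrow> real \<Rightarrow> real \<Rightarrow> real" where
  "kappa p \<alpha> \<nu> = (1/2) * (1 - p powr (-(\<nu> - \<alpha>) / 2)) ^ 3"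

end

theory Submission
  imports Defs "HOL-Library.Transitive_Closure_Table"
begin

text \<open>
  The rate matrix \<open>Q\<^sub>h\<close> is reversible with respect to \<open>\<pi>\<close>, since
  \<open>\<pi>(x) Q\<^sub>h(x,y) = \<pi>(x) h(\<pi>(y)/\<pi>(x)) / E\<^sub>\<pi>[Z\<^sub>h]\<close> is symmetric by the balancing property.
  For a reversible rate matrix a Poincare inequality with constant \<open>g > 0\<close> makes the eigenvalue
  \<open>0\<close> simple and pushes every eigenvalue with a mean-zero eigenvector below \<open>-g\<close>; a maximiser
  of the Rayleigh quotient over mean-zero functions is such an eigenvector, so \<open>g \<le> Gap(Q\<^sub>h)\<close>.

  The Poincare inequality bounds the variance by two energies. Outside \<open>X\<^sup>*\<close> every state
  \<open>x\<close> is compared with \<open>T(x)\<close>: since \<open>\<pi>(T x) \<ge> p\<^sup>\<nu> \<pi>(x)\<close> and at most \<open>p\<^sup>\<alpha>\<close> states share an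
  image, these comparisons sum like a geometric series of ratio \<open>p\<^bsup>(\<alpha>-\<nu>)/2\<^esup>\<close>. Inside \<open>X\<^sup>*\<close>
  any two modes are joined by a path of length at most \<open>M - 1\<close> of the restricted chain. Both
  energies are dominated by the Dirichlet form of \<open>Q\<^sub>h\<close> because \<open>h\<close> is non-decreasing, so an
  uphill edge \<open>x \<rightarrow> T x\<close> has weight at least \<open>h(1) \<pi>(x)\<close>. The bounds on \<open>E\<^sub>\<pi>[Z\<^sub>h]\<close> follow by
  splitting the sum over edges according to which endpoints are modes.
\<close>

section \<open>Spectral gap of reversible rate matrices\<close>

lemma linear_coeff_eq_0_if_quadratic_nonpos:
  fixes a b :: real
  assumes "\<And>t. a * t + b * t^2 \<le> 0"
  shows "a = 0"
proof -
  define t where "t = a / (\<bar>b\<bar> + 1)"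
  have t_scaled: "t * (\<bar>b\<bar> + 1) = a"
    unfolding t_def by (simp add: add_pos_nonneg)
  have "a^2 * (\<bar>b\<bar> + b + 1) = a * (t * (\<bar>b\<bar> + 1)) * (\<bar>b\<bar> + 1) + b * (t * (\<bar>b\<bar> + 1))^2"
    unfolding t_scaled by (simp add: algebra_simps power2_eq_square)
  also have "\<dots> = (a * t + b * t^2) * (\<bar>b\<bar> + 1)^2"
    by (simp add: algebra_simps power2_eq_square)
  also have "\<dots> \<le> 0"
    using assms[of t] by (simp add: mult_nonpos_nonneg)
  finally have "a^2 * (\<bar>b\<bar> + b + 1) \<le> 0" .
  moreover have "\<bar>b\<bar> + b + 1 > 0" by linarith
  ultimately have "a^2 \<le> 0" by (simp add: mult_le_0_iff)
  then show ?thesis by simp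
qed

lemma count_eig_mset:
  assumes "finite {c. \<exists>v. v \<noteq> 0 \<and> to_mat Q *v v = c *\<^sub>R v}"
  shows "count (eig_mset Q) t = dim {v. to_mat Q *v v = t *\<^sub>R v}"
proof -
  let ?E = "{c. \<exists>v. v \<noteq> 0 \<and> to_mat Q *v v = c *\<^sub>R v}"
  have "count (eig_mset Q) t = (\<Sum>c\<in>?E. if t = c then dim {v. to_mat Q *v v = c *\<^sub>R v} else 0)"
    unfolding eig_mset_def count_sum by simp
  also have "\<dots> = (if t \<in> ?E then dim {v. to_mat Q *v v = t *\<^sub>R v} else 0)"
    using assms by simp
  also have "\<dots> = dim {v. to_mat Q *v v = t *\<^sub>R v}"
    using dim_eq_0[of "{v. to_mat Q *v v = t *\<^sub>R v}"] by auto
  finally show ?thesis .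
qed

lemma second_of_sorted_desc_le:
  fixes xs :: "real list"
  assumes sorted: "sorted (rev xs)" and zero_once: "count (mset xs) 0 = 1"
    and dichotomy: "\<forall>t\<in>set xs. t = 0 \<or> t \<le> -g" and nonzero: "\<exists>t\<in>set xs. t \<noteq> 0"
  shows "xs ! 1 \<le> -g"
proof -
  obtain x0 x1 rest where xs: "xs = x0 # x1 # rest"
    using zero_once nonzero by (cases xs rule: remdups_adj.cases) auto
  have "x1 \<le> x0" using sorted xs by (simp add: sorted_append)
  moreover have "x0 = 0 \<or> x0 \<le> -g" "x1 = 0 \<or> x1 \<le> -g" using dichotomy xs by auto
  moreover have "\<not> (x0 = 0 \<and> x1 = 0)" using zero_once xs by auto
  ultimately show ?thesis using xs by auto
qed

locale reversible_rate_matrix =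
  fixes w :: "'a::finite \<Rightarrow> real" and A :: "'a \<Rightarrow> 'a \<Rightarrow> real"
  assumes weight_pos: "\<And>x. w x > 0"
    and detailed_balance: "\<And>x y. w x * A x y = w y * A y x"
    and row_sum_zero: "\<And>x. (\<Sum>y\<in>UNIV. A x y) = 0"
begin

definition w_mean :: "('a \<Rightarrow> real) \<Rightarrow> real" where
  "w_mean f = (\<Sum>x\<in>UNIV. w x * f x)"

definition w_inner :: "('a \<Rightarrow> real) \<Rightarrow> ('a \<Rightarrow> real) \<Rightarrow> real" where
  "w_inner f g = (\<Sum>x\<in>UNIV. w x * f x * g x)"

definition gen_apply :: "('a \<Rightarrow> real) \<Rightarrow> 'a \<Rightarrow> real" where
  "gen_apply f x = (\<Sum>y\<in>UNIV. A x y * f y)"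

definition dirichlet_form :: "('a \<Rightarrow> real) \<Rightarrow> real" where
  "dirichlet_form f = (\<Sum>x\<in>UNIV. \<Sum>y\<in>UNIV. w x * A x y * (f x - f y)^2) / 2"

definition poincare_inequality :: "real \<Rightarrow> bool" where
  "poincare_inequality g \<longleftrightarrow> (\<forall>f. w_mean f = 0 \<longrightarrow> g * w_inner f f \<le> dirichlet_form f)"

lemma w_inner_comm: "w_inner f g = w_inner g f"
  by (simp add: w_inner_def mult_ac)

lemma w_inner_gen_apply_sym: "w_inner f (gen_apply g) = w_inner g (gen_apply f)"
proof -
  have "w_inner f (gen_apply g) = (\<Sum>x\<in>UNIV. \<Sum>y\<in>UNIV. (w y * A y x) * f x * g y)"
    by (simp add: w_inner_def gen_apply_def sum_distrib_left detailed_balance mult_ac)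
  also have "\<dots> = (\<Sum>y\<in>UNIV. \<Sum>x\<in>UNIV. (w y * A y x) * f x * g y)"
    by (rule sum.swap)
  also have "\<dots> = w_inner g (gen_apply f)"
    by (simp add: w_inner_def gen_apply_def sum_distrib_left mult_ac)
  finally show ?thesis .
qed

lemma gen_apply_const: "gen_apply (\<lambda>_. m) = (\<lambda>_. 0)"
  by (simp add: fun_eq_iff gen_apply_def sum_distrib_right[symmetric] row_sum_zero)

lemma w_mean_gen_apply: "w_mean (gen_apply f) = 0"
proof -
  have "w_mean (gen_apply f) = w_inner (\<lambda>_. 1) (gen_apply f)"
    by (simp add: w_mean_def w_inner_def)
  also have "\<dots> = 0"
    by (subst w_inner_gen_apply_sym) (simp add: gen_apply_const w_inner_def)
  finally show ?thesis .
qed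

lemma w_inner_gen_apply_self: "w_inner f (gen_apply f) = - dirichlet_form f"
proof -
  define cross where "cross = (\<Sum>x\<in>UNIV. \<Sum>y\<in>UNIV. w x * A x y * f x * f y)"
  have left: "(\<Sum>x\<in>UNIV. \<Sum>y\<in>UNIV. w x * A x y * (f x)^2) = 0"
    by (simp add: sum_distrib_left[symmetric] mult.commute[of _ "(f _)^2"] mult.assoc
        flip: sum_distrib_right) (simp add: sum_distrib_left[symmetric] row_sum_zero)
  have "(\<Sum>x\<in>UNIV. \<Sum>y\<in>UNIV. w x * A x y * (f y)^2) = (\<Sum>y\<in>UNIV. \<Sum>x\<in>UNIV. w y * A y x * (f y)^2)"
    by (subst sum.swap) (simp add: detailed_balance)
  with left have right: "(\<Sum>x\<in>UNIV. \<Sum>y\<in>UNIV. w x * A x y * (f y)^2) = 0" by simp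
  have "(\<Sum>x\<in>UNIV. \<Sum>y\<in>UNIV. w x * A x y * (f x - f y)^2) =
        (\<Sum>x\<in>UNIV. \<Sum>y\<in>UNIV. w x * A x y * (f x)^2) - 2 * cross
          + (\<Sum>x\<in>UNIV. \<Sum>y\<in>UNIV. w x * A x y * (f y)^2)"
    by (simp add: cross_def power2_diff algebra_simps sum.distrib sum_subtractf sum_distrib_left)
  moreover have "w_inner f (gen_apply f) = cross"
    by (simp add: cross_def w_inner_def gen_apply_def sum_distrib_left mult_ac)
  ultimately show ?thesis using left right by (simp add: dirichlet_form_def)
qed

lemma w_inner_self_nonneg: "w_inner f f \<ge> 0"
  unfolding w_inner_def by (intro sum_nonneg) (simp add: weight_pos less_imp_le mult.assoc)

lemma w_inner_self_pos: "f a \<noteq> 0 \<Longrightarrow> w_inner f f > 0"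
proof -
  assume "f a \<noteq> 0"
  then have "0 < w a * f a * f a" using weight_pos[of a] by (metis mult.assoc mult_pos_pos not_real_square_gt_zero)
  also have "\<dots> \<le> w_inner f f"
    unfolding w_inner_def
    by (rule member_le_sum) (simp_all add: weight_pos less_imp_le mult.assoc)
  finally show ?thesis .
qed

lemma w_inner_self_eq_0_iff: "w_inner f f = 0 \<longleftrightarrow> f = (\<lambda>_. 0)"
proof
  assume "w_inner f f = 0"
  then have "f a = 0" for a using w_inner_self_pos[of f a] by auto
  then show "f = (\<lambda>_. 0)" by auto
qed (simp add: w_inner_def)

lemma w_inner_add_scaled:
  "w_inner (\<lambda>x. f x + t * g x) (\<lambda>x. f x + t * g x) = w_inner f f + 2 * t * w_inner f g + t^2 * w_inner g g"
  by (simp add: w_inner_def algebra_simps power2_eq_square sum.distrib sum_distrib_left)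

lemma gen_apply_add_scaled: "gen_apply (\<lambda>x. f x + t * g x) = (\<lambda>x. gen_apply f x + t * gen_apply g x)"
  by (simp add: fun_eq_iff gen_apply_def algebra_simps sum.distrib sum_distrib_left)

lemma w_inner_gen_apply_add_scaled:
  "w_inner (\<lambda>x. f x + t * g x) (gen_apply (\<lambda>x. f x + t * g x)) =
     w_inner f (gen_apply f) + 2 * t * w_inner g (gen_apply f) + t^2 * w_inner g (gen_apply g)"
proof -
  have "w_inner (\<lambda>x. f x + t * g x) (gen_apply (\<lambda>x. f x + t * g x)) =
      w_inner f (gen_apply f) + t * w_inner f (gen_apply g) + t * w_inner g (gen_apply f)
        + t^2 * w_inner g (gen_apply g)"
    by (simp add: gen_apply_add_scaled w_inner_def algebra_simps power2_eq_square sum.distrib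
        sum_distrib_left)
  then show ?thesis using w_inner_gen_apply_sym[of f g] by simp
qed

lemma w_mean_scale: "w_mean (\<lambda>x. c * f x) = c * w_mean f"
  by (simp add: w_mean_def sum_distrib_left mult_ac)

lemma w_inner_scale_left: "w_inner (\<lambda>x. c * f x) g = c * w_inner f g"
  by (simp add: w_inner_def sum_distrib_left mult_ac)

lemma w_inner_scale: "w_inner (\<lambda>x. c * f x) (\<lambda>x. c * g x) = c^2 * w_inner f g"
  by (simp add: w_inner_def sum_distrib_left power2_eq_square mult_ac)

lemma gen_apply_scale: "gen_apply (\<lambda>x. c * f x) = (\<lambda>x. c * gen_apply f x)"
  by (simp add: fun_eq_iff gen_apply_def sum_distrib_left mult_ac)

text \<open>\<open>weighted\<close> is an isometry from \<open>L\<^sup>2(w)\<close> onto Euclidean space; it transports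
  compactness of the unit sphere and independence of orthogonal families from the library.\<close>

definition weighted :: "('a \<Rightarrow> real) \<Rightarrow> real^'a" where
  "weighted f = (\<chi> x. sqrt (w x) * f x)"

definition unweighted :: "real^'a \<Rightarrow> 'a \<Rightarrow> real" where
  "unweighted u x = u $ x / sqrt (w x)"

lemma weight_neq_0 [simp]: "w x \<noteq> 0"
  using weight_pos[of x] by simp

lemma unweighted_weighted: "unweighted (weighted f) = f"
  by (simp add: fun_eq_iff weighted_def unweighted_def)

lemma weighted_unweighted: "weighted (unweighted u) = u"
  by (simp add: vec_eq_iff weighted_def unweighted_def)

lemma inner_weighted: "weighted f \<bullet> weighted g = w_inner f g"
proof -
  have "sqrt (w x) * sqrt (w x) = w x" for x
    using weight_pos[of x] by simp
  then show ?thesis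
    by (simp add: weighted_def w_inner_def inner_vec_def mult_ac)
qed

definition mean_zero_sphere :: "(real^'a) set" where
  "mean_zero_sphere = sphere 0 1 \<inter> {u. w_mean (unweighted u) = 0}"

lemma compact_mean_zero_sphere: "compact mean_zero_sphere"
  unfolding mean_zero_sphere_def w_mean_def unweighted_def
  by (intro compact_Int_closed compact_sphere closed_Collect_eq continuous_intros) simp_all

lemma normalized_mem_mean_zero_sphere:
  assumes "w_mean f = 0" and "w_inner f f > 0"
  shows "weighted (\<lambda>x. (1 / sqrt (w_inner f f)) * f x) \<in> mean_zero_sphere"
proof -
  have "norm (weighted (\<lambda>x. (1 / sqrt (w_inner f f)) * f x)) = 1"
    using assms(2) w_inner_scale[of "1 / sqrt (w_inner f f)" f f]
    by (simp add: norm_eq_sqrt_inner inner_weighted power_divide)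
  then show ?thesis
    using assms(1) w_mean_scale[of "1 / sqrt (w_inner f f)" f]
    by (simp add: mean_zero_sphere_def unweighted_weighted)
qed

lemma mean_zero_sphere_nonempty:
  assumes "(a::'a) \<noteq> b"
  shows "mean_zero_sphere \<noteq> {}"
proof -
  define f where "f x = (if x = a then w b else 0) - (if x = b then w a else 0)" for x
  have "w x * f x = (if x = a then w a * w b else 0) - (if x = b then w b * w a else 0)" for x
    by (simp add: f_def)
  then have "w_mean f = 0"
    using assms by (simp add: w_mean_def sum_subtractf mult.commute)
  moreover have "f a \<noteq> 0"
    using assms weight_pos[of b] by (simp add: f_def)
  ultimately show ?thesis
    using normalized_mem_mean_zero_sphere[of f] w_inner_self_pos[of f a] by blast
qed

lemma rayleigh_maximizer_exists:
  assumes "(a::'a) \<noteq> b"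
  obtains v where "w_mean v = 0" "w_inner v v = 1"
    "\<And>f. w_mean f = 0 \<Longrightarrow> w_inner f (gen_apply f) \<le> w_inner v (gen_apply v) * w_inner f f"
proof -
  define R where "R f = w_inner f (gen_apply f)" for f
  have R_scale: "R (\<lambda>x. c * f x) = c^2 * R f" for c f
    by (simp only: R_def gen_apply_scale w_inner_scale)
  have "continuous_on mean_zero_sphere (\<lambda>u. R (unweighted u))"
    unfolding R_def w_inner_def gen_apply_def unweighted_def
    by (intro continuous_intros) simp_all
  then obtain u where u: "u \<in> mean_zero_sphere"
    and u_max: "\<And>u'. u' \<in> mean_zero_sphere \<Longrightarrow> R (unweighted u') \<le> R (unweighted u)"
    using continuous_attains_sup[OF compact_mean_zero_sphere mean_zero_sphere_nonempty[OF assms]]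
    by blast
  define v where "v = unweighted u"
  have "w_inner v v = (norm u)^2"
    by (simp flip: inner_weighted add: v_def weighted_unweighted power2_norm_eq_inner)
  then have v_norm: "w_inner v v = 1"
    using u by (simp add: mean_zero_sphere_def)
  have "R f \<le> R v * w_inner f f" if "w_mean f = 0" for f
  proof (cases "w_inner f f = 0")
    case True
    then have "f = (\<lambda>_. 0)" by (simp add: w_inner_self_eq_0_iff)
    then show ?thesis by (simp add: R_def w_inner_def)
  next
    case False
    then have pos: "w_inner f f > 0" using w_inner_self_nonneg[of f] by simp
    have "R f / w_inner f f = R (\<lambda>x. (1 / sqrt (w_inner f f)) * f x)"
      using pos R_scale[of "1 / sqrt (w_inner f f)" f] by (simp add: power_divide)
    also have "\<dots> \<le> R v"
      using u_max[OF normalized_mem_mean_zero_sphere[OF that pos]]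
      by (simp add: v_def unweighted_weighted)
    finally show ?thesis using pos by (simp add: divide_le_eq)
  qed
  moreover have "w_mean v = 0" using u by (simp add: mean_zero_sphere_def v_def)
  ultimately show ?thesis using that v_norm unfolding R_def by blast
qed

lemma rayleigh_maximizer_is_eigenfunction:
  assumes v_mean: "w_mean v = 0" and v_norm: "w_inner v v = 1"
    and v_max: "\<And>f. w_mean f = 0 \<Longrightarrow> w_inner f (gen_apply f) \<le> w_inner v (gen_apply v) * w_inner f f"
  shows "gen_apply v = (\<lambda>x. w_inner v (gen_apply v) * v x)"
proof -
  define lam where "lam = w_inner v (gen_apply v)"
  have first_variation: "w_inner f (gen_apply v) = lam * w_inner v f" if f_mean: "w_mean f = 0" for f
  proof -
    have "(2 * (w_inner f (gen_apply v) - lam * w_inner v f)) * t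
        + (w_inner f (gen_apply f) - lam * w_inner f f) * t^2 \<le> 0" for t
    proof -
      have "w_mean (\<lambda>x. v x + t * f x) = 0"
        using v_mean f_mean by (simp add: w_mean_def algebra_simps sum.distrib flip: sum_distrib_left)
      from v_max[OF this] show ?thesis
        by (simp add: w_inner_add_scaled w_inner_gen_apply_add_scaled v_norm lam_def algebra_simps)
    qed
    then show ?thesis using linear_coeff_eq_0_if_quadratic_nonpos by fastforce
  qed
  define r where "r x = gen_apply v x - lam * v x" for x
  have "w_mean r = 0"
    using v_mean w_mean_gen_apply[of v]
    by (simp add: r_def w_mean_def algebra_simps sum_subtractf flip: sum_distrib_left)
  then have "w_inner r (gen_apply v) = lam * w_inner r v"
    using first_variation w_inner_comm by metis
  moreover have "w_inner r r = w_inner r (gen_apply v) - lam * w_inner r v"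
    by (simp add: r_def w_inner_def algebra_simps sum_subtractf sum.distrib sum_distrib_left)
  ultimately have "w_inner r r = 0" by simp
  then show ?thesis
    by (simp add: w_inner_self_eq_0_iff r_def fun_eq_iff lam_def)
qed

lemma to_mat_eigen_iff: "to_mat A *v v = c *\<^sub>R v \<longleftrightarrow> gen_apply (($) v) = (\<lambda>x. c * v $ x)"
  by (simp add: vec_eq_iff fun_eq_iff to_mat_def matrix_vector_mult_def gen_apply_def)

lemma w_mean_eigenfunction:
  assumes "gen_apply f = (\<lambda>x. c * f x)" and "c \<noteq> 0"
  shows "w_mean f = 0"
  using w_mean_gen_apply[of f] w_mean_scale[of c f] assms by simp

lemma eigenvalue_le_if_poincare:
  assumes "poincare_inequality g" and eigen: "gen_apply f = (\<lambda>x. c * f x)"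
    and "w_mean f = 0" and "f a \<noteq> 0"
  shows "c \<le> - g"
proof -
  have "g * w_inner f f \<le> dirichlet_form f"
    using assms(1,3) unfolding poincare_inequality_def by blast
  also have "\<dots> = - c * w_inner f f"
    using w_inner_gen_apply_self[of f] w_inner_scale_left[of c f f] eigen by (simp add: w_inner_comm)
  finally have "(g + c) * w_inner f f \<le> 0" by (simp add: algebra_simps)
  then show ?thesis
    using w_inner_self_pos[of f a, OF assms(4)] by (simp add: mult_le_0_iff)
qed

lemma gen_apply_eq_0_imp_const:
  assumes wsum: "(\<Sum>x\<in>UNIV. w x) = 1" and poincare: "poincare_inequality g" and "g > 0"
    and harmonic: "gen_apply f = (\<lambda>_. 0)"
  shows "f = (\<lambda>_. w_mean f)"
proof -
  define d where "d x = f x - w_mean f" for x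
  have "w_mean d = 0"
    using wsum by (simp add: d_def w_mean_def algebra_simps sum_subtractf flip: sum_distrib_right)
  moreover have "gen_apply d = (\<lambda>_. 0)"
    using harmonic gen_apply_const[of "w_mean f"]
    by (simp add: fun_eq_iff d_def gen_apply_def algebra_simps sum_subtractf)
  then have "dirichlet_form d = 0"
    using w_inner_gen_apply_self[of d] by (simp add: w_inner_def)
  ultimately have "g * w_inner d d \<le> 0"
    using poincare unfolding poincare_inequality_def by fastforce
  then have "w_inner d d = 0"
    using \<open>g > 0\<close> w_inner_self_nonneg[of d] by (simp add: mult_le_0_iff)
  then show ?thesis by (simp add: w_inner_self_eq_0_iff d_def fun_eq_iff)
qed

lemma finite_eigenvalues: "finite {c. \<exists>v. v \<noteq> 0 \<and> to_mat A *v v = c *\<^sub>R v}"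
proof -
  define E where "E = {c. \<exists>v. v \<noteq> 0 \<and> to_mat A *v v = c *\<^sub>R v}"
  have "\<forall>c\<in>E. \<exists>v. v \<noteq> 0 \<and> gen_apply (($) v) = (\<lambda>x. c * v $ x)"
    by (simp add: E_def to_mat_eigen_iff)
  from bchoice[OF this] obtain ev
    where ev: "\<And>c. c \<in> E \<Longrightarrow> ev c \<noteq> 0 \<and> gen_apply (($) (ev c)) = (\<lambda>x. c * ev c $ x)"
    by blast
  define u where "u c = weighted (($) (ev c))" for c
  have orthogonal: "u c \<bullet> u d = 0" if "c \<in> E" "d \<in> E" "c \<noteq> d" for c d
  proof -
    have "c * w_inner (($) (ev c)) (($) (ev d)) = w_inner (($) (ev d)) (gen_apply (($) (ev c)))"
      using ev[OF that(1)] w_inner_scale_left[of c] by (simp add: w_inner_comm)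
    also have "\<dots> = d * w_inner (($) (ev c)) (($) (ev d))"
      using ev[OF that(2)] w_inner_scale_left[of d] by (simp add: w_inner_gen_apply_sym w_inner_comm)
    finally show ?thesis using that(3) by (simp add: u_def inner_weighted)
  qed
  have nonzero: "u c \<bullet> u c \<noteq> 0" if c: "c \<in> E" for c
  proof -
    obtain x where "ev c $ x \<noteq> 0" using ev[OF c] by (auto simp: vec_eq_iff)
    then show ?thesis using w_inner_self_pos[of "($) (ev c)" x] by (simp add: u_def inner_weighted)
  qed
  have inj: "inj_on u E"
  proof (rule inj_onI)
    fix c d assume "c \<in> E" "d \<in> E" "u c = u d"
    then show "c = d" using orthogonal[of c d] nonzero[of c] by auto
  qed
  have "pairwise orthogonal (u ` E)"
    unfolding pairwise_def orthogonal_def using orthogonal by auto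
  moreover have "0 \<notin> u ` E" using nonzero by force
  ultimately have "independent (u ` E)"
    using pairwise_orthogonal_independent by blast
  then have "finite (u ` E)" using independent_bound by blast
  then show ?thesis unfolding E_def[symmetric] using finite_imageD[OF _ inj] by blast
qed

definition eigenspace :: "real \<Rightarrow> (real^'a) set" where
  "eigenspace c = {v. to_mat A *v v = c *\<^sub>R v}"

lemma count_eig_desc: "count (mset (eig_desc A)) c = dim (eigenspace c)"
  using count_eig_mset[OF finite_eigenvalues] by (simp add: eig_desc_def eigenspace_def)

lemma mem_eig_desc_iff: "c \<in> set (eig_desc A) \<longleftrightarrow> (\<exists>v. v \<noteq> 0 \<and> gen_apply (($) v) = (\<lambda>x. c * v $ x))"
proof -
  have "c \<in> set (eig_desc A) \<longleftrightarrow> dim (eigenspace c) \<noteq> 0"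
    using count_eig_desc[of c] by (metis count_eq_zero_iff set_mset_mset)
  then show ?thesis by (auto simp: eigenspace_def to_mat_eigen_iff)
qed

lemma eig_desc_dichotomy:
  assumes "poincare_inequality g" and "c \<in> set (eig_desc A)"
  shows "c = 0 \<or> c \<le> -g"
proof -
  obtain v where "v \<noteq> 0" and eigen: "gen_apply (($) v) = (\<lambda>x. c * v $ x)"
    using assms(2) by (auto simp: mem_eig_desc_iff)
  moreover obtain x where "v $ x \<noteq> 0" using \<open>v \<noteq> 0\<close> by (auto simp: vec_eq_iff)
  ultimately show ?thesis
    using w_mean_eigenfunction eigenvalue_le_if_poincare[OF assms(1)] by blast
qed

lemma eigenspace_0_eq_constants:
  assumes "(\<Sum>x\<in>UNIV. w x) = 1" and "poincare_inequality g" and "g > 0"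
  shows "eigenspace 0 = span {\<chi> _. 1}"
proof
  show "eigenspace 0 \<subseteq> span {\<chi> _. 1}"
  proof
    fix v assume "v \<in> eigenspace 0"
    then have "gen_apply (($) v) = (\<lambda>_. 0)"
      using to_mat_eigen_iff[of v 0] by (simp add: eigenspace_def)
    then have "($) v = (\<lambda>_. w_mean (($) v))"
      by (rule gen_apply_eq_0_imp_const[OF assms])
    then have "v = w_mean (($) v) *\<^sub>R (\<chi> _. 1)" by (simp add: vec_eq_iff fun_eq_iff)
    then show "v \<in> span {\<chi> _. 1}" by (metis span_base span_scale singletonI)
  qed
  show "span {\<chi> _. 1} \<subseteq> eigenspace 0"
  proof
    fix v :: "real^'a" assume "v \<in> span {\<chi> _. 1}"
    then obtain k where "v = k *\<^sub>R (\<chi> _. 1)" by (auto simp: span_singleton)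
    then have "($) v = (\<lambda>_. k)" by (simp add: fun_eq_iff)
    then show "v \<in> eigenspace 0"
      using gen_apply_const[of k] to_mat_eigen_iff[of v 0] by (simp add: eigenspace_def)
  qed
qed

lemma exists_eigenvalue_le_if_poincare:
  assumes "(a::'a) \<noteq> b" and "poincare_inequality g"
  shows "\<exists>c\<in>set (eig_desc A). c \<le> -g"
proof -
  obtain v where "w_mean v = 0" "w_inner v v = 1"
    "\<And>f. w_mean f = 0 \<Longrightarrow> w_inner f (gen_apply f) \<le> w_inner v (gen_apply v) * w_inner f f"
    using rayleigh_maximizer_exists[OF assms(1)] by blast
  moreover define lam where "lam = w_inner v (gen_apply v)"
  ultimately have eigen: "gen_apply v = (\<lambda>x. lam * v x)"
    using rayleigh_maximizer_is_eigenfunction by blast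
  have "v \<noteq> (\<lambda>_. 0)" using \<open>w_inner v v = 1\<close> by (auto simp: w_inner_def)
  then obtain x where "v x \<noteq> 0" by auto
  then have "lam \<le> -g"
    using eigenvalue_le_if_poincare[OF assms(2) eigen \<open>w_mean v = 0\<close>] by blast
  moreover have "lam \<in> set (eig_desc A)"
    unfolding mem_eig_desc_iff using eigen \<open>v x \<noteq> 0\<close>
    by (intro exI[of _ "vec_lambda v"]) (auto simp: vec_eq_iff vec_lambda_inverse)
  ultimately show ?thesis by blast
qed

theorem le_Gap_if_poincare:
  assumes "(\<Sum>x\<in>UNIV. w x) = 1" and "(a::'a) \<noteq> b" and "g > 0"
    and poincare: "poincare_inequality g"
  shows "g \<le> Gap A"
proof -
  have zero_once: "count (mset (eig_desc A)) 0 = 1"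
    unfolding count_eig_desc eigenspace_0_eq_constants[OF assms(1) poincare \<open>g > 0\<close>]
    by (simp add: vec_eq_iff)
  have dichotomy: "\<forall>c\<in>set (eig_desc A). c = 0 \<or> c \<le> -g"
    using eig_desc_dichotomy[OF poincare] by blast
  obtain c where "c \<in> set (eig_desc A)" and "c \<le> -g"
    using exists_eigenvalue_le_if_poincare[OF assms(2) poincare] by blast
  then have nonzero: "\<exists>c\<in>set (eig_desc A). c \<noteq> 0"
    using \<open>g > 0\<close> by (intro bexI[of _ c]) auto
  have "sorted (rev (eig_desc A))"
    by (simp add: eig_desc_def)
  then have "eig_desc A ! 1 \<le> -g"
    by (rule second_of_sorted_desc_le[OF _ zero_once dichotomy nonzero])
  then show ?thesis by (simp add: Gap_def)
qed

end

section \<open>Stationary distributions of reversible kernels\<close>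

lemma harmonic_const_if_irreducible:
  fixes K :: "'a::finite \<Rightarrow> 'a \<Rightarrow> real"
  assumes stochastic: "stochastic K" and irreducible: "irreducible K"
    and harmonic: "\<And>x. g x = (\<Sum>y\<in>UNIV. K x y * g y)"
  shows "g x = g y"
proof -
  define m where "m = Max (range g)"
  have g_le: "g u \<le> m" for u by (simp add: m_def)
  have "m \<in> range g" unfolding m_def by (rule Max_in) auto
  then obtain z where z: "g z = m" by (metis rangeE)
  have spread: "g b = m" if "g a = m" "K a b > 0" for a b
  proof -
    have "(\<Sum>c\<in>UNIV. K a c * (m - g c)) = m * (\<Sum>c\<in>UNIV. K a c) - (\<Sum>c\<in>UNIV. K a c * g c)"
      by (simp add: algebra_simps sum_subtractf sum_distrib_left)
    also have "\<dots> = 0"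
      using stochastic harmonic[of a] that(1) by (simp add: stochastic_def)
    finally have "\<forall>c\<in>UNIV. K a c * (m - g c) = 0"
      using stochastic g_le by (subst sum_nonneg_eq_0_iff[symmetric]) (auto simp: stochastic_def)
    then show ?thesis using that(2) by force
  qed
  have "g u = m" for u
  proof -
    have "(z, u) \<in> {(a, b). a \<in> UNIV \<and> b \<in> UNIV \<and> K a b > 0}\<^sup>*"
      using irreducible unfolding irreducible_def irreducible_on_def by blast
    then show ?thesis
      by (induction rule: rtrancl_induct) (use z spread in auto)
  qed
  then show ?thesis by simp
qed

lemma stationary_eq_reversible:
  fixes K :: "'a::finite \<Rightarrow> 'a \<Rightarrow> real"
  assumes stochastic: "stochastic K" and irreducible: "irreducible K"
    and mu_pos: "\<And>x. \<mu> x > 0" and mu_sum: "(\<Sum>x\<in>UNIV. \<mu> x) = 1"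
    and reversible: "\<And>x y. \<mu> x * K x y = \<mu> y * K y x"
    and mu'_sum: "(\<Sum>x\<in>UNIV. \<mu>' x) = 1" and stationary: "\<And>y. (\<Sum>x\<in>UNIV. \<mu>' x * K x y) = \<mu>' y"
  shows "\<mu>' = \<mu>"
proof -
  define g where "g x = \<mu>' x / \<mu> x" for x
  have mu': "\<mu>' x = g x * \<mu> x" for x
    using mu_pos[of x] by (simp add: g_def)
  have "g x = (\<Sum>y\<in>UNIV. K x y * g y)" for x
  proof -
    have "g x * \<mu> x = (\<Sum>y\<in>UNIV. g y * (\<mu> y * K y x))"
      using stationary[of x] by (simp add: mu' mult_ac)
    also have "\<dots> = (\<Sum>y\<in>UNIV. g y * (\<mu> x * K x y))"
      by (simp only: reversible)
    also have "\<dots> = \<mu> x * (\<Sum>y\<in>UNIV. K x y * g y)"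
      by (simp add: sum_distrib_left mult_ac)
    finally show ?thesis using mu_pos[of x] by (simp add: mult.commute)
  qed
  then have g_const: "g x = g y" for x y
    by (rule harmonic_const_if_irreducible[OF stochastic irreducible])
  have "g x = 1" for x
  proof -
    have "1 = (\<Sum>y\<in>UNIV. g y * \<mu> y)"
      using mu'_sum by (simp add: mu')
    also have "\<dots> = (\<Sum>y\<in>UNIV. g x * \<mu> y)"
      by (intro sum.cong refl arg_cong2[where f = "(*)"] g_const)
    also have "\<dots> = g x"
      using mu_sum by (simp flip: sum_distrib_left)
    finally show ?thesis by simp
  qed
  then show ?thesis
    by (simp add: fun_eq_iff mu')
qed

lemma stationary_dist_eqI:
  fixes K :: "'a::finite \<Rightarrow> 'a \<Rightarrow> real"
  assumes stochastic: "stochastic K" and irreducible: "irreducible K"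
    and mu_pos: "\<And>x. \<mu> x > 0" and mu_sum: "(\<Sum>x\<in>UNIV. \<mu> x) = 1"
    and reversible: "\<And>x y. \<mu> x * K x y = \<mu> y * K y x"
  shows "stationary_dist K = \<mu>"
  unfolding stationary_dist_def
proof (rule the_equality)
  have "(\<Sum>x\<in>UNIV. \<mu> x * K x y) = \<mu> y * (\<Sum>x\<in>UNIV. K y x)" for y
    by (simp add: reversible sum_distrib_left)
  then have "(\<Sum>x\<in>UNIV. \<mu> x * K x y) = \<mu> y" for y
    using stochastic by (simp add: stochastic_def)
  then show "(\<forall>x. \<mu> x \<ge> 0) \<and> (\<Sum>x\<in>UNIV. \<mu> x) = 1 \<and> (\<forall>y. (\<Sum>x\<in>UNIV. \<mu> x * K x y) = \<mu> y)"
    using mu_pos mu_sum by (simp add: less_imp_le)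
qed (use stationary_eq_reversible[OF assms] in blast)

lemma Qh_off_diag: "x \<noteq> y \<Longrightarrow> Qh \<pi> N h x y = stationary_dist (Kh \<pi> N h) x * Kh \<pi> N h x y / \<pi> x"
  by (simp add: Qh_def Let_def mult.commute)

lemma Qh_row_sum: "(\<Sum>y\<in>UNIV. Qh \<pi> N h x y) = 0"
proof -
  have "(\<Sum>y\<in>UNIV. Qh \<pi> N h x y) = Qh \<pi> N h x x + (\<Sum>y\<in>UNIV - {x}. Qh \<pi> N h x y)"
    by (simp add: sum.remove)
  also have "(\<Sum>y\<in>UNIV - {x}. Qh \<pi> N h x y) = - Qh \<pi> N h x x"
    by (simp add: Qh_def Let_def)
  finally show ?thesis by simp
qed

section \<open>Mass and neighbourhood bounds on the landscape\<close>

lemma power2_add_le_split: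
  fixes a b r :: real
  assumes "0 < r" "r < 1"
  shows "(a + b)^2 \<le> a^2 / (1 - r) + b^2 / r"
proof -
  have "r * (1 - r) * (a + b)^2 \<le> r * a^2 + (1 - r) * b^2"
    using zero_le_power2[of "r * a - (1 - r) * b"] by (simp add: algebra_simps power2_eq_square)
  moreover have "a^2 / (1 - r) + b^2 / r = (r * a^2 + (1 - r) * b^2) / (r * (1 - r))"
    using assms by (simp add: field_simps)
  ultimately show ?thesis
    using assms by (simp add: le_divide_eq mult.commute)
qed

lemma expect_Zh_eq: "expect \<pi> (Zh \<pi> N h) = (\<Sum>x\<in>UNIV. \<Sum>y\<in>N x. \<pi> x * h (\<pi> y / \<pi> x))"
  by (simp add: expect_def Zh_def sum_distrib_left)

locale landscape =
  fixes \<pi> :: "'a::finite \<Rightarrow> real" and N :: "'a \<Rightarrow> 'a set"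
    and p \<alpha> \<nu> :: real and Xs :: "'a set" and T :: "'a \<Rightarrow> 'a"
  assumes pi_pos: "\<And>x. \<pi> x > 0" and pi_sum: "(\<Sum>x\<in>UNIV. \<pi> x) = 1"
    and p_gt_1: "p > 1" and alpha_pos: "\<alpha> > 0" and nu_gt_alpha: "\<nu> > \<alpha>"
    and N_sym: "\<And>x y. y \<in> N x \<longleftrightarrow> x \<in> N y" and N_irrefl: "\<And>x. x \<notin> N x"
    and card_N_le: "\<And>x. real (card (N x)) \<le> p powr \<alpha>"
    and two_le_card_modes: "card Xs \<ge> 2"
    and pi_modes_eq: "\<And>x x'. x \<in> Xs \<Longrightarrow> x' \<in> Xs \<Longrightarrow> \<pi> x = \<pi> x'"
    and T_in_N: "\<And>x. T x \<in> N x"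
    and pi_T_ge: "\<And>x. x \<notin> Xs \<Longrightarrow> \<pi> (T x) \<ge> p powr \<nu> * \<pi> x"
begin

lemma pi_neq_0 [simp]: "\<pi> x \<noteq> 0"
  using pi_pos[of x] by simp

lemma pi_nonneg: "\<pi> x \<ge> 0"
  using pi_pos[of x] by simp

lemma p_powr_nu_gt_1: "p powr \<nu> > 1"
  using p_gt_1 nu_gt_alpha alpha_pos by simp

lemma p_powr_nu_pos: "p powr \<nu> > 0"
  using p_powr_nu_gt_1 by linarith

lemma pi_le_pi_T_div: "x \<notin> Xs \<Longrightarrow> \<pi> x \<le> \<pi> (T x) / p powr \<nu>"
  using pi_T_ge[of x] by (simp add: pos_le_divide_eq[OF p_powr_nu_pos] mult.commute)

lemma pi_less_pi_T: "x \<notin> Xs \<Longrightarrow> \<pi> x < \<pi> (T x)"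
  using pi_T_ge[of x] mult_strict_right_mono[OF p_powr_nu_gt_1 pi_pos[of x]] by simp

lemma modes_nonempty: "Xs \<noteq> {}"
  using two_le_card_modes by auto

definition mode_prob :: real where
  "mode_prob = \<pi> (SOME x. x \<in> Xs)"

lemma pi_mode: "x \<in> Xs \<Longrightarrow> \<pi> x = mode_prob"
  unfolding mode_prob_def using modes_nonempty by (metis pi_modes_eq some_in_eq)

lemma mode_prob_pos: "mode_prob > 0"
proof -
  obtain x where "x \<in> Xs" using modes_nonempty by blast
  then show ?thesis using pi_mode pi_pos by metis
qed

lemma card_modes_mult_mode_prob_le: "real (card Xs) * mode_prob \<le> 1"
proof -
  have "real (card Xs) * mode_prob = (\<Sum>x\<in>Xs. \<pi> x)"
    by (simp add: pi_mode)
  also have "\<dots> \<le> (\<Sum>x\<in>UNIV. \<pi> x)"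
    by (rule sum_mono2) (auto simp: pi_nonneg)
  finally show ?thesis using pi_sum by simp
qed

lemma pi_le_mode_prob: "\<pi> y \<le> mode_prob"
proof -
  have "Max (range \<pi>) \<in> range \<pi>"
    by (rule Max_in) auto
  then obtain z where "\<pi> z = Max (range \<pi>)" by (metis rangeE)
  then have z_max: "\<pi> u \<le> \<pi> z" for u by simp
  have "z \<in> Xs"
    using pi_less_pi_T[of z] z_max[of "T z"] by fastforce
  then show ?thesis using z_max[of y] pi_mode by simp
qed

lemma uphill_downhill_disjoint: "(\<lambda>x. (x, T x)) ` (-Xs) \<inter> (\<lambda>x. (T x, x)) ` (-Xs) = {}"
proof -
  have False if "x \<notin> Xs" "y \<notin> Xs" "x = T y" "T x = y" for x y
    using pi_less_pi_T[OF that(1)] pi_less_pi_T[OF that(2)] that(3,4) by simp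
  then show ?thesis by auto
qed

lemma sum_comp_T_le:
  assumes G_nonneg: "\<And>y. G y \<ge> 0"
  shows "(\<Sum>x\<in>S. G (T x)) \<le> p powr \<alpha> * (\<Sum>y\<in>UNIV. G y)"
proof -
  have "(\<Sum>x\<in>S. G (T x)) \<le> (\<Sum>x\<in>UNIV. G (T x))"
    by (rule sum_mono2) (auto simp: G_nonneg)
  also have "\<dots> = (\<Sum>y\<in>UNIV. \<Sum>x\<in>UNIV. if T x = y then G y else 0)"
    by (subst sum.swap) simp
  also have "\<dots> = (\<Sum>y\<in>UNIV. real (card {x. T x = y}) * G y)"
    by (simp add: sum.If_cases)
  also have "\<dots> \<le> (\<Sum>y\<in>UNIV. p powr \<alpha> * G y)"
  proof (rule sum_mono)
    fix y
    have "card {x. T x = y} \<le> card (N y)"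
      using T_in_N N_sym by (intro card_mono) auto
    then have "real (card {x. T x = y}) \<le> p powr \<alpha>"
      using card_N_le[of y] by linarith
    then show "real (card {x. T x = y}) * G y \<le> p powr \<alpha> * G y"
      using G_nonneg[of y] by (rule mult_right_mono)
  qed
  finally show ?thesis by (simp add: sum_distrib_left)
qed

lemma sum_outside_modes_comp_T_le:
  assumes G_nonneg: "\<And>y. G y \<ge> 0"
  shows "(\<Sum>x\<in>-Xs. \<pi> x * G (T x)) \<le> p powr (\<alpha> - \<nu>) * (\<Sum>y\<in>UNIV. \<pi> y * G y)"
proof -
  have "(\<Sum>x\<in>-Xs. \<pi> x * G (T x)) \<le> (\<Sum>x\<in>-Xs. \<pi> (T x) * G (T x)) / p powr \<nu>"
    unfolding sum_divide_distrib
  proof (rule sum_mono)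
    fix x assume "x \<in> -Xs"
    then have "\<pi> x \<le> \<pi> (T x) / p powr \<nu>" by (simp add: pi_le_pi_T_div)
    then have "\<pi> x * G (T x) \<le> \<pi> (T x) / p powr \<nu> * G (T x)"
      using G_nonneg by (rule mult_right_mono)
    then show "\<pi> x * G (T x) \<le> \<pi> (T x) * G (T x) / p powr \<nu>" by simp
  qed
  also have "\<dots> \<le> p powr \<alpha> * (\<Sum>y\<in>UNIV. \<pi> y * G y) / p powr \<nu>"
    using p_powr_nu_gt_1 G_nonneg pi_nonneg
    by (intro divide_right_mono sum_comp_T_le) auto
  finally show ?thesis by (simp add: powr_diff)
qed

lemma mass_outside_modes_le: "(\<Sum>x\<in>-Xs. \<pi> x) \<le> p powr (\<alpha> - \<nu>)"
  using sum_outside_modes_comp_T_le[of "\<lambda>_. 1"] pi_sum by simp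

lemma sum_neighbours_swap: "(\<Sum>x\<in>UNIV. \<Sum>y\<in>N x. F x y) = (\<Sum>x\<in>UNIV. \<Sum>y\<in>N x. F y x)"
proof -
  have "(\<Sum>x\<in>UNIV. \<Sum>y\<in>N x. F x y) = (\<Sum>x\<in>UNIV. \<Sum>y\<in>UNIV. if y \<in> N x then F x y else 0)"
    by (simp add: sum.If_cases)
  also have "\<dots> = (\<Sum>y\<in>UNIV. \<Sum>x\<in>UNIV. if x \<in> N y then F x y else 0)"
    by (subst sum.swap) (simp add: N_sym)
  also have "\<dots> = (\<Sum>x\<in>UNIV. \<Sum>y\<in>N x. F y x)"
    by (simp add: sum.If_cases)
  finally show ?thesis .
qed

lemma sum_neighbours_outside_modes:
  "(\<Sum>x\<in>UNIV. \<Sum>y\<in>N x. if x \<notin> Xs then \<pi> x else 0) \<le> p powr (2 * \<alpha> - \<nu>)"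
proof -
  have "(\<Sum>x\<in>UNIV. \<Sum>y\<in>N x. if x \<notin> Xs then \<pi> x else 0)
      = (\<Sum>x\<in>UNIV. if x \<in> -Xs then real (card (N x)) * \<pi> x else 0)"
    by (intro sum.cong) auto
  also have "\<dots> = (\<Sum>x\<in>-Xs. real (card (N x)) * \<pi> x)"
    using sum.inter_restrict[of UNIV "\<lambda>x. real (card (N x)) * \<pi> x" "-Xs"] by simp
  also have "\<dots> \<le> (\<Sum>x\<in>-Xs. p powr \<alpha> * \<pi> x)"
    using card_N_le pi_nonneg by (intro sum_mono mult_right_mono)
  also have "\<dots> \<le> p powr \<alpha> * p powr (\<alpha> - \<nu>)"
    using mass_outside_modes_le by (simp add: sum_distrib_left[symmetric] mult_left_mono)
  also have "\<dots> = p powr (2 * \<alpha> - \<nu>)"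
    by (simp add: powr_add[symmetric])
  finally show ?thesis .
qed

lemma sum_neighbours_within_modes:
  "(\<Sum>x\<in>UNIV. \<Sum>y\<in>N x. if x \<in> Xs \<and> y \<in> Xs then mode_prob else 0) \<le> real (card Xs) - 1"
proof -
  have "(\<Sum>y\<in>N x. if x \<in> Xs \<and> y \<in> Xs then mode_prob else 0)
      \<le> (if x \<in> Xs then mode_prob * (real (card Xs) - 1) else 0)" for x
  proof (cases "x \<in> Xs")
    case True
    have "card (N x \<inter> Xs) \<le> card (Xs - {x})"
      using N_irrefl by (intro card_mono) auto
    then have "real (card (N x \<inter> Xs)) \<le> real (card Xs) - 1"
      using True two_le_card_modes by simp
    then show ?thesis
      using True mode_prob_pos by (simp add: sum.If_cases Int_def)
  qed simp
  then have "(\<Sum>x\<in>UNIV. \<Sum>y\<in>N x. if x \<in> Xs \<and> y \<in> Xs then mode_prob else 0)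
      \<le> (\<Sum>x\<in>UNIV. if x \<in> Xs then mode_prob * (real (card Xs) - 1) else 0)"
    by (rule sum_mono)
  also have "\<dots> = (real (card Xs) * mode_prob) * (real (card Xs) - 1)"
    by (simp add: sum.If_cases)
  also have "\<dots> \<le> real (card Xs) - 1"
    using card_modes_mult_mode_prob_le two_le_card_modes mode_prob_pos
    by (intro mult_left_le_one_le) auto
  finally show ?thesis .
qed

lemma sum_neighbours_of_modes:
  "(\<Sum>x\<in>UNIV. \<Sum>y\<in>N x. if x \<in> Xs then mode_prob else 0) \<le> p powr \<alpha>"
proof -
  have "(\<Sum>x\<in>UNIV. \<Sum>y\<in>N x. if x \<in> Xs then mode_prob else 0)
      = (\<Sum>x\<in>UNIV. if x \<in> Xs then real (card (N x)) * mode_prob else 0)"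
    by (intro sum.cong) auto
  also have "\<dots> = (\<Sum>x\<in>Xs. real (card (N x)) * mode_prob)"
    using sum.inter_restrict[of UNIV "\<lambda>x. real (card (N x)) * mode_prob" Xs] by simp
  also have "\<dots> \<le> (\<Sum>x\<in>Xs. p powr \<alpha> * mode_prob)"
    using card_N_le mode_prob_pos by (intro sum_mono mult_right_mono) (auto simp: less_imp_le)
  also have "\<dots> = (real (card Xs) * mode_prob) * p powr \<alpha>"
    by simp
  also have "\<dots> \<le> p powr \<alpha>"
    using card_modes_mult_mode_prob_le mode_prob_pos
    by (intro mult_left_le_one_le) auto
  finally show ?thesis .
qed

lemma expect_Zh_one_plus_le: "expect \<pi> (Zh \<pi> N (\<lambda>u. 1 + u)) \<le> 2 * p powr \<alpha>"
proof -
  have "expect \<pi> (Zh \<pi> N (\<lambda>u. 1 + u)) = (\<Sum>x\<in>UNIV. \<Sum>y\<in>N x. \<pi> x) + (\<Sum>x\<in>UNIV. \<Sum>y\<in>N x. \<pi> y)"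
    by (simp add: expect_Zh_eq distrib_left sum.distrib)
  also have "\<dots> = 2 * (\<Sum>x\<in>UNIV. real (card (N x)) * \<pi> x)"
    using sum_neighbours_swap[of "\<lambda>x y. \<pi> x"] by simp
  also have "\<dots> \<le> 2 * (\<Sum>x\<in>UNIV. p powr \<alpha> * \<pi> x)"
    using card_N_le pi_nonneg by (intro mult_left_mono sum_mono mult_right_mono) auto
  finally show ?thesis
    using pi_sum by (simp add: sum_distrib_left[symmetric])
qed

lemma expect_Zh_min_le:
  "expect \<pi> (Zh \<pi> N (\<lambda>u. min 1 u)) \<le> 2 * p powr (2 * \<alpha> - \<nu>) + (real (card Xs) - 1)"
proof -
  have pairwise: "\<pi> x * min 1 (\<pi> y / \<pi> x) \<le> (if x \<notin> Xs then \<pi> x else 0)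
      + (if y \<notin> Xs then \<pi> y else 0) + (if x \<in> Xs \<and> y \<in> Xs then mode_prob else 0)" for x y
  proof -
    have "\<pi> x * min 1 (\<pi> y / \<pi> x) = min (\<pi> x) (\<pi> y)"
      using pi_pos[of x] by (simp add: min_def field_simps)
    then show ?thesis
      using pi_mode[of x] pi_nonneg[of x] pi_nonneg[of y] by auto
  qed
  have "expect \<pi> (Zh \<pi> N (\<lambda>u. min 1 u))
      \<le> (\<Sum>x\<in>UNIV. \<Sum>y\<in>N x. (if x \<notin> Xs then \<pi> x else 0)
        + (if y \<notin> Xs then \<pi> y else 0) + (if x \<in> Xs \<and> y \<in> Xs then mode_prob else 0))"
    unfolding expect_Zh_eq by (intro sum_mono pairwise)
  also have "\<dots> = (\<Sum>x\<in>UNIV. \<Sum>y\<in>N x. if x \<notin> Xs then \<pi> x else 0)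
        + (\<Sum>x\<in>UNIV. \<Sum>y\<in>N x. if y \<notin> Xs then \<pi> y else 0)
        + (\<Sum>x\<in>UNIV. \<Sum>y\<in>N x. if x \<in> Xs \<and> y \<in> Xs then mode_prob else 0)"
    by (simp only: sum.distrib)
  also have "\<dots> \<le> 2 * p powr (2 * \<alpha> - \<nu>) + (real (card Xs) - 1)"
    using sum_neighbours_outside_modes sum_neighbours_within_modes
      sum_neighbours_swap[of "\<lambda>x y. if x \<notin> Xs then \<pi> x else 0"]
    by linarith
  finally show ?thesis .
qed

lemma sqrt_pi_mult_le_mode_outside:
  assumes "x \<in> Xs" and "y \<notin> Xs"
  shows "sqrt (\<pi> x * \<pi> y) \<le> p powr (- \<nu> / 2) * mode_prob"
proof -
  have "\<pi> y \<le> mode_prob / p powr \<nu>"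
    using pi_le_pi_T_div[OF assms(2)] pi_le_mode_prob[of "T y"] p_powr_nu_gt_1
    by (smt (verit) divide_right_mono)
  then have "\<pi> x * \<pi> y \<le> mode_prob * (mode_prob / p powr \<nu>)"
    using assms(1) pi_mode mode_prob_pos by (metis less_imp_le mult_left_mono)
  also have "\<dots> = (p powr (- \<nu> / 2) * mode_prob)^2"
    by (simp add: power2_eq_square powr_add[symmetric] powr_minus_divide)
  finally have "sqrt (\<pi> x * \<pi> y) \<le> sqrt ((p powr (- \<nu> / 2) * mode_prob)^2)"
    by (rule real_sqrt_le_mono)
  then show ?thesis
    using mode_prob_pos by simp
qed

lemma pi_mult_sqrt_le_split:
  "\<pi> x * sqrt (\<pi> y / \<pi> x) \<le> (if x \<notin> Xs then \<pi> x else 0) / 2 + (if y \<notin> Xs then \<pi> y else 0) / 2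
     + p powr (- \<nu> / 2) * (if x \<in> Xs then mode_prob else 0)
     + p powr (- \<nu> / 2) * (if y \<in> Xs then mode_prob else 0)
     + (if x \<in> Xs \<and> y \<in> Xs then mode_prob else 0)"
proof -
  have "\<pi> x * sqrt (\<pi> y / \<pi> x) = sqrt (\<pi> x * \<pi> y)"
    using pi_pos[of x] by (simp add: real_sqrt_divide real_sqrt_mult field_simps)
  moreover have "p powr (- \<nu> / 2) * mode_prob \<ge> 0"
    using mode_prob_pos by simp
  moreover have "sqrt (\<pi> x * \<pi> y) \<le> (\<pi> x + \<pi> y) / 2"
    using pi_nonneg[of x] pi_nonneg[of y] by (rule arith_geo_mean_sqrt)
  ultimately show ?thesis
    using sqrt_pi_mult_le_mode_outside[of x y] sqrt_pi_mult_le_mode_outside[of y x]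
      pi_mode[of x] pi_mode[of y] pi_nonneg[of x] pi_nonneg[of y]
    by (cases "x \<in> Xs"; cases "y \<in> Xs") (simp_all add: mult.commute)
qed

lemma expect_Zh_sqrt_le:
  "expect \<pi> (Zh \<pi> N sqrt) \<le> p powr (2 * \<alpha> - \<nu>) + 2 * p powr (\<alpha> - \<nu> / 2) + (real (card Xs) - 1)"
proof -
  define K where "K = p powr (- \<nu> / 2)"
  have K_nonneg: "K \<ge> 0" by (simp add: K_def)
  have "expect \<pi> (Zh \<pi> N sqrt) \<le> (\<Sum>x\<in>UNIV. \<Sum>y\<in>N x. (if x \<notin> Xs then \<pi> x else 0) / 2
      + (if y \<notin> Xs then \<pi> y else 0) / 2 + K * (if x \<in> Xs then mode_prob else 0)
      + K * (if y \<in> Xs then mode_prob else 0) + (if x \<in> Xs \<and> y \<in> Xs then mode_prob else 0))"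
    unfolding expect_Zh_eq K_def by (intro sum_mono pi_mult_sqrt_le_split)
  also have "\<dots> = (\<Sum>x\<in>UNIV. \<Sum>y\<in>N x. if x \<notin> Xs then \<pi> x else 0) / 2
        + (\<Sum>x\<in>UNIV. \<Sum>y\<in>N x. if y \<notin> Xs then \<pi> y else 0) / 2
        + K * (\<Sum>x\<in>UNIV. \<Sum>y\<in>N x. if x \<in> Xs then mode_prob else 0)
        + K * (\<Sum>x\<in>UNIV. \<Sum>y\<in>N x. if y \<in> Xs then mode_prob else 0)
        + (\<Sum>x\<in>UNIV. \<Sum>y\<in>N x. if x \<in> Xs \<and> y \<in> Xs then mode_prob else 0)"
    by (simp only: sum.distrib sum_divide_distrib sum_distrib_left)
  also have "\<dots> \<le> p powr (2 * \<alpha> - \<nu>) + 2 * (K * p powr \<alpha>) + (real (card Xs) - 1)"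
    unfolding sum_neighbours_swap[of "\<lambda>x y. if x \<notin> Xs then \<pi> x else 0", symmetric]
      sum_neighbours_swap[of "\<lambda>x y. if x \<in> Xs then mode_prob else 0", symmetric]
    using sum_neighbours_outside_modes sum_neighbours_within_modes
      mult_left_mono[OF sum_neighbours_of_modes K_nonneg]
    by linarith
  also have "K * p powr \<alpha> = p powr (\<alpha> - \<nu> / 2)"
    unfolding K_def by (simp add: powr_add[symmetric])
  finally show ?thesis .
qed

definition rho :: real where
  "rho = p powr ((\<alpha> - \<nu>) / 2)"

lemma rho_pos: "rho > 0"
  using p_gt_1 by (simp add: rho_def)

lemma rho_lt_1: "rho < 1"
  unfolding rho_def using p_gt_1 nu_gt_alpha by (intro powr_less_one) auto

lemma rho_sq: "rho^2 = p powr (\<alpha> - \<nu>)"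
  using p_gt_1 by (simp add: rho_def power2_eq_square powr_add[symmetric])

lemma kappa_eq: "kappa p \<alpha> \<nu> = (1 - rho)^3 / 2"
proof -
  have "- (\<nu> - \<alpha>) / 2 = (\<alpha> - \<nu>) / 2" by simp
  then show ?thesis by (simp add: kappa_def rho_def)
qed

definition descent_energy :: "('a \<Rightarrow> real) \<Rightarrow> real" where
  "descent_energy f = (\<Sum>x\<in>-Xs. \<pi> x * (f x - f (T x))^2)"

definition mode_edges :: "('a \<times> 'a) set" where
  "mode_edges = {(x, y). x \<in> Xs \<and> y \<in> Xs \<and> y \<in> N x}"

definition mode_energy :: "('a \<Rightarrow> real) \<Rightarrow> real" where
  "mode_energy f = (\<Sum>(x, y)\<in>mode_edges. (f x - f y)^2)"

lemma descent_energy_nonneg: "descent_energy f \<ge> 0"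
  unfolding descent_energy_def by (intro sum_nonneg) (simp add: pi_nonneg)

lemma mode_energy_nonneg: "mode_energy f \<ge> 0"
  unfolding mode_energy_def by (intro sum_nonneg) auto

lemma variance_le_descent_energy:
  "(\<Sum>x\<in>UNIV. \<pi> x * (f x - m)^2)
     \<le> mode_prob * (\<Sum>z\<in>Xs. (f z - m)^2) / (1 - rho) + descent_energy f / (1 - rho)^2"
proof -
  define G where "G x = (f x - m)^2" for x
  define V where "V = (\<Sum>x\<in>UNIV. \<pi> x * G x)"
  have outside: "(\<Sum>x\<in>-Xs. \<pi> x * G x) \<le> descent_energy f / (1 - rho) + rho * V"
  proof -
    have "\<pi> x * G x \<le> \<pi> x * (f x - f (T x))^2 / (1 - rho) + \<pi> x * G (T x) / rho" for x
    proof -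
      have "G x = ((f x - f (T x)) + (f (T x) - m))^2" by (simp add: G_def)
      also have "\<dots> \<le> (f x - f (T x))^2 / (1 - rho) + G (T x) / rho"
        unfolding G_def by (rule power2_add_le_split[OF rho_pos rho_lt_1])
      finally have "\<pi> x * G x \<le> \<pi> x * ((f x - f (T x))^2 / (1 - rho) + G (T x) / rho)"
        using pi_nonneg by (rule mult_left_mono)
      then show ?thesis by (simp add: distrib_left)
    qed
    then have "(\<Sum>x\<in>-Xs. \<pi> x * G x)
        \<le> (\<Sum>x\<in>-Xs. \<pi> x * (f x - f (T x))^2 / (1 - rho) + \<pi> x * G (T x) / rho)"
      by (rule sum_mono)
    also have "\<dots> = descent_energy f / (1 - rho) + (\<Sum>x\<in>-Xs. \<pi> x * G (T x)) / rho"
      by (simp add: descent_energy_def sum.distrib sum_divide_distrib)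
    also have "(\<Sum>x\<in>-Xs. \<pi> x * G (T x)) / rho \<le> rho^2 * V / rho"
      unfolding rho_sq V_def using rho_pos
      by (intro divide_right_mono sum_outside_modes_comp_T_le) (auto simp: G_def)
    finally show ?thesis using rho_pos by (simp add: power2_eq_square)
  qed
  have "V = mode_prob * (\<Sum>z\<in>Xs. G z) + (\<Sum>x\<in>-Xs. \<pi> x * G x)"
    unfolding V_def using sum.subset_diff[of Xs UNIV "\<lambda>x. \<pi> x * G x"]
    by (simp add: pi_mode sum_distrib_left Compl_eq_Diff_UNIV)
  with outside have "(1 - rho) * V \<le> mode_prob * (\<Sum>z\<in>Xs. G z) + descent_energy f / (1 - rho)"
    by (simp add: algebra_simps)
  then have "V \<le> (mode_prob * (\<Sum>z\<in>Xs. G z) + descent_energy f / (1 - rho)) / (1 - rho)"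
    using rho_lt_1 by (simp add: le_divide_eq mult.commute)
  then show ?thesis
    by (simp add: V_def G_def add_divide_distrib power2_eq_square)
qed

end

section \<open>The balanced chain and its Poincare inequality\<close>

lemma power2_add_le_path:
  fixes a b s k :: real
  assumes "b^2 \<le> k * s" "s \<ge> 0" "k \<ge> 0"
  shows "(a + b)^2 \<le> (k + 1) * (a^2 + s)"
proof (cases "k = 0")
  case True
  then show ?thesis using assms by simp
next
  case False
  then have "k > 0" using assms(3) by simp
  have "k * (a + b)^2 \<le> k * (k + 1) * a^2 + (k + 1) * b^2"
    using zero_le_power2[of "k * a - b"] by (simp add: algebra_simps power2_eq_square)
  also have "\<dots> \<le> k * (k + 1) * a^2 + (k + 1) * (k * s)"
    using assms by (intro add_left_mono mult_left_mono) auto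
  also have "\<dots> = k * ((k + 1) * (a^2 + s))"
    by (simp add: algebra_simps)
  finally show ?thesis using \<open>k > 0\<close> by simp
qed

lemma rtrancl_path_edges_subset:
  assumes "rtrancl_path R x ys z" and "distinct (x # ys)"
  shows "set (zip (x # ys) ys) \<subseteq> {(u, v). R u v \<and> u \<noteq> v}"
  using assms by (induction rule: rtrancl_path.induct) auto

lemma rtrancl_path_sq_diff_le:
  fixes f :: "'a \<Rightarrow> real"
  assumes "rtrancl_path R x ys z" and "distinct (x # ys)"
  shows "(f x - f z)^2 \<le> real (length ys) * (\<Sum>(u, v)\<in>set (zip (x # ys) ys). (f u - f v)^2)"
  using assms
proof (induction rule: rtrancl_path.induct)
  case (step x y ys z)
  define S where "S = (\<Sum>(u, v)\<in>set (zip (y # ys) ys). (f u - f v)^2)"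
  have "(x, y) \<notin> set (zip (y # ys) ys)"
    using step.prems by (auto dest: set_zip_leftD)
  then have "(\<Sum>(u, v)\<in>set (zip (x # y # ys) (y # ys)). (f u - f v)^2) = (f x - f y)^2 + S"
    by (simp add: S_def)
  moreover have "(f x - f z)^2 \<le> (1 + real (length ys)) * ((f x - f y)^2 + S)"
  proof -
    have "(f y - f z)^2 \<le> real (length ys) * S"
      using step.IH step.prems by (simp add: S_def)
    moreover have "S \<ge> 0" unfolding S_def by (intro sum_nonneg) auto
    ultimately have "((f x - f y) + (f y - f z))^2 \<le> (real (length ys) + 1) * ((f x - f y)^2 + S)"
      by (intro power2_add_le_path) auto
    then show ?thesis by (simp add: add.commute)
  qed
  ultimately show ?case by simp
qed simp

locale balanced_chain = landscape \<pi> N p \<alpha> \<nu> Xs T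
  for \<pi> :: "'a::finite \<Rightarrow> real" and N p \<alpha> \<nu> Xs T +
  fixes h :: "real \<Rightarrow> real"
  assumes N_irreducible: "\<forall>K. stochastic K \<and> (\<forall>x y. K x y > 0 \<longleftrightarrow> y \<in> N x) \<longrightarrow> irreducible K"
    and balancing: "balancing h"
    and modes_irreducible: "irreducible_on Xs (restrict_kernel (Kh \<pi> N h) Xs)"
begin

abbreviation Z_mean :: real where
  "Z_mean \<equiv> expect \<pi> (Zh \<pi> N h)"

lemma h_pos: "u > 0 \<Longrightarrow> h u > 0"
  using balancing unfolding balancing_def by blast

lemma h_mono:
  assumes "0 < u" "u \<le> v"
  shows "h u \<le> h v"
proof -
  have "mono_on {0<..} h"
    using balancing unfolding balancing_def by blast
  then show ?thesis
    using assms by (auto intro: mono_onD)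
qed

lemma h_balance: "u > 0 \<Longrightarrow> h u = u * h (1 / u)"
  using balancing unfolding balancing_def by blast

lemma pi_mult_h_sym: "\<pi> x * h (\<pi> y / \<pi> x) = \<pi> y * h (\<pi> x / \<pi> y)"
proof -
  have "h (\<pi> y / \<pi> x) = (\<pi> y / \<pi> x) * h (\<pi> x / \<pi> y)"
    using h_balance[of "\<pi> y / \<pi> x"] pi_pos[of x] pi_pos[of y] by simp
  then show ?thesis by simp
qed

definition edge_weight :: "'a \<Rightarrow> 'a \<Rightarrow> real" where
  "edge_weight x y = (if y \<in> N x then \<pi> x * h (\<pi> y / \<pi> x) else 0)"

lemma edge_weight_sym: "edge_weight x y = edge_weight y x"
  using N_sym[of x y] pi_mult_h_sym[of x y] by (simp add: edge_weight_def)

lemma edge_weight_nonneg: "edge_weight x y \<ge> 0"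
  using pi_pos[of x] pi_pos[of y] h_pos[of "\<pi> y / \<pi> x"] by (simp add: edge_weight_def)

lemma Zh_pos: "Zh \<pi> N h x > 0"
  unfolding Zh_def using T_in_N[of x] pi_pos h_pos by (intro sum_pos) auto

lemma Z_mean_pos: "Z_mean > 0"
  unfolding expect_def using pi_pos Zh_pos by (intro sum_pos) auto

lemma Kh_pos_iff: "Kh \<pi> N h x y > 0 \<longleftrightarrow> y \<in> N x"
  using Zh_pos[of x] h_pos[of "\<pi> y / \<pi> x"] pi_pos[of x] pi_pos[of y] by (simp add: Kh_def)

lemma stochastic_Kh: "stochastic (Kh \<pi> N h)"
proof -
  have "Kh \<pi> N h x y \<ge> 0" for x y
    using Kh_pos_iff[of x y] by (auto simp: Kh_def)
  moreover have "(\<Sum>y\<in>UNIV. Kh \<pi> N h x y) = 1" for x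
  proof -
    have "(\<Sum>y\<in>UNIV. Kh \<pi> N h x y) = (\<Sum>y\<in>N x. h (\<pi> y / \<pi> x)) / Zh \<pi> N h x"
      by (simp add: Kh_def sum.If_cases sum_divide_distrib)
    then show ?thesis
      using Zh_pos[of x] by (simp add: Zh_def)
  qed
  ultimately show ?thesis by (simp add: stochastic_def)
qed

lemma irreducible_Kh: "irreducible (Kh \<pi> N h)"
  by (rule N_irreducible[rule_format]) (simp add: stochastic_Kh Kh_pos_iff)

definition pi_h :: "'a \<Rightarrow> real" where
  "pi_h x = \<pi> x * Zh \<pi> N h x / Z_mean"

lemma pi_h_mult_Kh: "pi_h x * Kh \<pi> N h x y = edge_weight x y / Z_mean"
  using Zh_pos[of x] by (simp add: pi_h_def Kh_def edge_weight_def)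

lemma stationary_dist_Kh: "stationary_dist (Kh \<pi> N h) = pi_h"
proof (rule stationary_dist_eqI[OF stochastic_Kh irreducible_Kh])
  show "pi_h x > 0" for x
    using pi_pos[of x] Zh_pos[of x] Z_mean_pos by (simp add: pi_h_def)
  show "(\<Sum>x\<in>UNIV. pi_h x) = 1"
    using Z_mean_pos by (simp add: pi_h_def expect_def flip: sum_divide_distrib)
  show "pi_h x * Kh \<pi> N h x y = pi_h y * Kh \<pi> N h y x" for x y
    by (simp add: pi_h_mult_Kh edge_weight_sym)
qed

lemma pi_mult_Qh: "x \<noteq> y \<Longrightarrow> \<pi> x * Qh \<pi> N h x y = edge_weight x y / Z_mean"
  by (simp add: Qh_off_diag stationary_dist_Kh pi_h_mult_Kh)

sublocale Q: reversible_rate_matrix \<pi> "Qh \<pi> N h"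
proof
  show "\<pi> x * Qh \<pi> N h x y = \<pi> y * Qh \<pi> N h y x" for x y
    by (cases "x = y") (simp_all add: pi_mult_Qh edge_weight_sym)
qed (simp_all add: pi_pos Qh_row_sum)

lemma dirichlet_form_Qh:
  "Q.dirichlet_form f = (\<Sum>x\<in>UNIV. \<Sum>y\<in>UNIV. edge_weight x y * (f x - f y)^2) / (2 * Z_mean)"
proof -
  have "\<pi> x * Qh \<pi> N h x y * (f x - f y)^2 = edge_weight x y * (f x - f y)^2 / Z_mean" for x y
    by (cases "x = y") (simp_all add: pi_mult_Qh)
  then show ?thesis
    by (simp add: Q.dirichlet_form_def sum_divide_distrib mult.commute)
qed

lemma edge_weight_descent: "x \<notin> Xs \<Longrightarrow> h 1 * \<pi> x \<le> edge_weight x (T x)"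
proof -
  assume "x \<notin> Xs"
  then have "1 \<le> \<pi> (T x) / \<pi> x"
    using pi_less_pi_T[of x] pi_pos[of x] by simp
  then have "h 1 \<le> h (\<pi> (T x) / \<pi> x)" by (rule h_mono[rotated]) simp
  then show ?thesis
    using T_in_N[of x] pi_pos[of x] by (simp add: edge_weight_def mult.commute)
qed

lemma edge_weight_mode: "(x, y) \<in> mode_edges \<Longrightarrow> edge_weight x y = h 1 * mode_prob"
  by (simp add: mode_edges_def edge_weight_def pi_mode mult.commute)

lemma descent_energy_le_edge_sum:
  "h 1 * descent_energy f \<le> (\<Sum>x\<in>-Xs. edge_weight x (T x) * (f x - f (T x))^2)"
proof -
  have "h 1 * descent_energy f = (\<Sum>x\<in>-Xs. h 1 * \<pi> x * (f x - f (T x))^2)"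
    by (simp add: descent_energy_def sum_distrib_left mult_ac)
  also have "\<dots> \<le> (\<Sum>x\<in>-Xs. edge_weight x (T x) * (f x - f (T x))^2)"
    using edge_weight_descent by (intro sum_mono mult_right_mono) auto
  finally show ?thesis .
qed

lemma energy_ge_descent_and_mode_energy:
  "h 1 * (2 * descent_energy f + mode_prob * mode_energy f)
     \<le> (\<Sum>x\<in>UNIV. \<Sum>y\<in>UNIV. edge_weight x y * (f x - f y)^2)"
proof -
  define F where "F e = edge_weight (fst e) (snd e) * (f (fst e) - f (snd e))^2" for e
  define up where "up = (\<lambda>x. (x, T x)) ` (-Xs)"
  define down where "down = (\<lambda>x. (T x, x)) ` (-Xs)"
  have "up \<inter> down = {}"
    using uphill_downhill_disjoint by (simp add: up_def down_def)
  moreover have "(up \<union> down) \<inter> mode_edges = {}"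
    by (auto simp: up_def down_def mode_edges_def)
  ultimately have "sum F up + sum F down + sum F mode_edges = sum F (up \<union> down \<union> mode_edges)"
    by (simp add: sum.union_disjoint Int_Un_distrib2)
  also have "\<dots> \<le> sum F UNIV"
    by (intro sum_mono2) (simp_all add: F_def edge_weight_nonneg)
  also have "\<dots> = (\<Sum>x\<in>UNIV. \<Sum>y\<in>UNIV. edge_weight x y * (f x - f y)^2)"
    by (simp add: F_def sum.cartesian_product split_def flip: UNIV_Times_UNIV)
  finally have total: "sum F up + sum F down + sum F mode_edges
      \<le> (\<Sum>x\<in>UNIV. \<Sum>y\<in>UNIV. edge_weight x y * (f x - f y)^2)" .
  have "sum F up = (\<Sum>x\<in>-Xs. edge_weight x (T x) * (f x - f (T x))^2)"
    unfolding up_def by (subst sum.reindex) (auto simp: inj_on_def F_def)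
  moreover have "sum F down = (\<Sum>x\<in>-Xs. edge_weight x (T x) * (f x - f (T x))^2)"
    unfolding down_def
    by (subst sum.reindex) (auto simp: inj_on_def F_def edge_weight_sym power2_commute)
  moreover have "sum F mode_edges = h 1 * mode_prob * mode_energy f"
    by (simp add: F_def mode_energy_def edge_weight_mode sum_distrib_left split_def)
  ultimately show ?thesis
    using total descent_energy_le_edge_sum[of f] by (simp add: algebra_simps)
qed

lemma sq_diff_modes_le:
  assumes "a \<in> Xs" and "b \<in> Xs"
  shows "(f a - f b)^2 \<le> (real (card Xs) - 1) * mode_energy f"
proof -
  define R where "R u v \<longleftrightarrow> u \<in> Xs \<and> v \<in> Xs \<and> restrict_kernel (Kh \<pi> N h) Xs u v > 0" for u v
  have "(a, b) \<in> {(u, v). R u v}\<^sup>*"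
    using modes_irreducible assms unfolding irreducible_on_def R_def by blast
  then have "R\<^sup>*\<^sup>* a b"
    by (simp add: rtranclp_rtrancl_eq)
  then obtain ys where "rtrancl_path R a ys b"
    by (auto simp: rtranclp_eq_rtrancl_path)
  then obtain ys where path: "rtrancl_path R a ys b" and distinct: "distinct (a # ys)"
    by (rule rtrancl_path_distinct)
  have "set ys \<subseteq> Xs"
    using path by (induction rule: rtrancl_path.induct) (auto simp: R_def)
  then have "card (set (a # ys)) \<le> card Xs"
    using assms(1) by (intro card_mono) auto
  then have length: "real (length ys) \<le> real (card Xs) - 1"
    using distinct_card[OF distinct] by simp
  have "set (zip (a # ys) ys) \<subseteq> mode_edges"
  proof -
    have "(u, v) \<in> mode_edges" if "R u v" "u \<noteq> v" for u v
      using that Kh_pos_iff[of u v] by (simp add: R_def restrict_kernel_def mode_edges_def)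
    then show ?thesis
      using rtrancl_path_edges_subset[OF path distinct] by blast
  qed
  then have "(\<Sum>(u, v)\<in>set (zip (a # ys) ys). (f u - f v)^2) \<le> mode_energy f"
    unfolding mode_energy_def by (intro sum_mono2) auto
  then have "real (length ys) * (\<Sum>(u, v)\<in>set (zip (a # ys) ys). (f u - f v)^2)
      \<le> (real (card Xs) - 1) * mode_energy f"
    using length mode_energy_nonneg by (intro mult_mono) (auto intro: sum_nonneg)
  then show ?thesis
    using rtrancl_path_sq_diff_le[OF path distinct, of f] by linarith
qed

lemma variance_le_energies:
  assumes mean_zero: "(\<Sum>x\<in>UNIV. \<pi> x * f x) = 0"
  shows "(\<Sum>x\<in>UNIV. \<pi> x * (f x)^2)
    \<le> mode_prob * (real (card Xs) * (real (card Xs) - 1) * mode_energy f) / (1 - rho)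
      + descent_energy f / (1 - rho)^2"
proof -
  obtain a where a: "a \<in> Xs" using modes_nonempty by blast
  have "(\<Sum>x\<in>UNIV. \<pi> x * (f x - f a)^2) = (\<Sum>x\<in>UNIV. \<pi> x * (f x)^2)
      - 2 * f a * (\<Sum>x\<in>UNIV. \<pi> x * f x) + (f a)^2 * (\<Sum>x\<in>UNIV. \<pi> x)"
    by (simp add: power2_diff algebra_simps sum.distrib sum_subtractf sum_distrib_left
        sum_distrib_right)
  then have "(\<Sum>x\<in>UNIV. \<pi> x * (f x)^2) \<le> (\<Sum>x\<in>UNIV. \<pi> x * (f x - f a)^2)"
    using mean_zero pi_sum by simp
  also have "\<dots> \<le> mode_prob * (\<Sum>z\<in>Xs. (f z - f a)^2) / (1 - rho) + descent_energy f / (1 - rho)^2"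
    by (rule variance_le_descent_energy)
  also have "(\<Sum>z\<in>Xs. (f z - f a)^2) \<le> real (card Xs) * (real (card Xs) - 1) * mode_energy f"
    using sum_mono[of Xs "\<lambda>z. (f z - f a)^2", OF sq_diff_modes_le[OF _ a]] by simp
  then have "mode_prob * (\<Sum>z\<in>Xs. (f z - f a)^2) / (1 - rho)
      \<le> mode_prob * (real (card Xs) * (real (card Xs) - 1) * mode_energy f) / (1 - rho)"
    using mode_prob_pos rho_lt_1 by (intro divide_right_mono mult_left_mono) auto
  finally show ?thesis by simp
qed

lemma kappa_mult_variance_le:
  assumes "(\<Sum>x\<in>UNIV. \<pi> x * f x) = 0"
  shows "kappa p \<alpha> \<nu> * (\<Sum>x\<in>UNIV. \<pi> x * (f x)^2)
    \<le> (real (card Xs) * (real (card Xs) - 1) * mode_prob * mode_energy f + descent_energy f) / 2"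
proof -
  define X where "X = real (card Xs) * (real (card Xs) - 1) * mode_prob * mode_energy f"
  define D where "D = descent_energy f"
  have "X \<ge> 0"
    using two_le_card_modes mode_prob_pos mode_energy_nonneg[of f] by (simp add: X_def)
  have "D \<ge> 0"
    using descent_energy_nonneg by (simp add: D_def)
  have "kappa p \<alpha> \<nu> * (\<Sum>x\<in>UNIV. \<pi> x * (f x)^2) \<le> (1 - rho)^3 / 2 * (X / (1 - rho) + D / (1 - rho)^2)"
    unfolding kappa_eq X_def D_def using variance_le_energies[OF assms] rho_lt_1
    by (intro mult_left_mono) (simp_all add: mult_ac)
  also have "\<dots> = ((1 - rho)^2 * X + (1 - rho) * D) / 2"
  proof -
    have "s^3 / 2 * (U / s + W / s^2) = (s^2 * U + s * W) / 2" if "s \<noteq> 0" for s U W :: real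
      using that by (simp add: field_simps power2_eq_square power3_eq_cube)
    then show ?thesis using rho_lt_1 by simp
  qed
  also have "\<dots> \<le> (X + D) / 2"
  proof -
    have "(1 - rho)^2 \<le> 1" and "1 - rho \<le> 1"
      using rho_pos rho_lt_1 by (simp_all add: power_le_one)
    then show ?thesis
      using \<open>X \<ge> 0\<close> \<open>D \<ge> 0\<close> rho_lt_1 by (intro divide_right_mono add_mono mult_left_le_one_le) auto
  qed
  finally show ?thesis by (simp add: X_def D_def)
qed

lemma poincare_Qh:
  "Q.poincare_inequality (kappa p \<alpha> \<nu> * h 1 /
     (3 * (real (card Xs) * p powr (\<alpha> - \<nu>) + 1) * real (card Xs) * (real (card Xs) - 1) * Z_mean))"
  unfolding Q.poincare_inequality_def
proof (intro allI impI)
  fix f assume "Q.w_mean f = 0"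
  define M where "M = real (card Xs)"
  define A where "A = 3 * (M * p powr (\<alpha> - \<nu>) + 1) * M * (M - 1)"
  define D where "D = descent_energy f"
  define S where "S = mode_prob * mode_energy f"
  have M2: "M * (M - 1) \<ge> 2"
    using two_le_card_modes mult_mono[of 2 M 1 "M - 1"] by (simp add: M_def)
  have A_ge: "A \<ge> M * (M - 1)"
  proof -
    have "1 * (M * (M - 1)) \<le> (3 * (M * p powr (\<alpha> - \<nu>) + 1)) * (M * (M - 1))"
      using M2 by (intro mult_right_mono) (auto simp: M_def)
    then show ?thesis by (simp add: A_def mult_ac)
  qed
  have "kappa p \<alpha> \<nu> * Q.w_inner f f \<le> (M * (M - 1) * S + D) / 2"
    using kappa_mult_variance_le[of f] \<open>Q.w_mean f = 0\<close>
    by (simp add: Q.w_inner_def Q.w_mean_def power2_eq_square M_def D_def S_def mult_ac)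
  also have "\<dots> \<le> A * (2 * D + S) / 2"
  proof -
    have "M * (M - 1) * S \<le> A * S"
      using A_ge mode_prob_pos mode_energy_nonneg by (intro mult_right_mono) (simp_all add: S_def)
    moreover have "1 * D \<le> (A * 2) * D"
      using A_ge M2 descent_energy_nonneg by (intro mult_right_mono) (auto simp: D_def)
    moreover have "A * (2 * D + S) = (A * 2) * D + A * S"
      by (simp add: algebra_simps)
    ultimately show ?thesis by simp
  qed
  finally have kappa_V: "kappa p \<alpha> \<nu> * Q.w_inner f f \<le> A * (2 * D + S) / 2" .
  have "kappa p \<alpha> \<nu> * h 1 / (A * Z_mean) * Q.w_inner f f
      = h 1 * (kappa p \<alpha> \<nu> * Q.w_inner f f) / (A * Z_mean)"
    by simp
  also have "\<dots> \<le> h 1 * (A * (2 * D + S) / 2) / (A * Z_mean)"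
    using kappa_V h_pos[of 1] Z_mean_pos A_ge M2
    by (intro divide_right_mono mult_left_mono) auto
  also have "\<dots> = h 1 * (2 * D + S) / (2 * Z_mean)"
    using A_ge M2 Z_mean_pos by (simp add: field_simps)
  also have "\<dots> \<le> Q.dirichlet_form f"
    unfolding dirichlet_form_Qh D_def S_def
    using energy_ge_descent_and_mode_energy[of f] Z_mean_pos by (intro divide_right_mono) auto
  finally show "kappa p \<alpha> \<nu> * h 1 / (3 * (real (card Xs) * p powr (\<alpha> - \<nu>) + 1)
      * real (card Xs) * (real (card Xs) - 1) * Z_mean) * Q.w_inner f f \<le> Q.dirichlet_form f"
    by (simp add: A_def M_def mult_ac)
qed

theorem Gap_Qh_ge:
  "kappa p \<alpha> \<nu> * h 1 /
     (3 * (real (card Xs) * p powr (\<alpha> - \<nu>) + 1) * real (card Xs) * (real (card Xs) - 1) * Z_mean)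
   \<le> Gap (Qh \<pi> N h)"
proof -
  obtain a b where "a \<in> Xs" "b \<in> Xs" "a \<noteq> b"
    using two_le_card_modes card_le_Suc0_iff_eq[of Xs] by force
  moreover have "kappa p \<alpha> \<nu> > 0"
    using rho_lt_1 by (simp add: kappa_eq)
  moreover have "real (card Xs) * p powr (\<alpha> - \<nu>) + 1 > 0" "real (card Xs) - 1 > 0"
    using two_le_card_modes by (simp_all add: add_nonneg_pos)
  ultimately show ?thesis
    using h_pos[of 1] Z_mean_pos two_le_card_modes
    by (intro Q.le_Gap_if_poincare[OF pi_sum _ _ poincare_Qh]) auto

qed

end

theorem theorem2:
  fixes \<pi> :: "'a::finite \<Rightarrow> real" and N :: "'a \<Rightarrow> 'a set"
    and p \<alpha> \<nu> :: real and Xs :: "'a set" and T :: "'a \<Rightarrow> 'a"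
  assumes pi_pos: "\<forall>x. \<pi> x > 0" and pi_sum: "(\<Sum>x\<in>UNIV. \<pi> x) = 1"
    and p_gt: "p > 1" and alpha_pos: "\<alpha> > 0"
    and N_sym: "\<forall>x y. y \<in> N x \<longleftrightarrow> x \<in> N y" and N_irrefl: "\<forall>x. x \<notin> N x"
    and N_irr: "\<forall>K. stochastic K \<and> (\<forall>x y. K x y > 0 \<longleftrightarrow> y \<in> N x) \<longrightarrow> irreducible K"
    and N_card: "\<forall>x. real (card (N x)) \<le> p powr \<alpha>"
    and M_ge: "card Xs \<ge> 2"
    and nu_gt: "\<nu> > \<alpha>"
    and cond_i: "\<forall>x\<in>Xs. \<forall>x'\<in>Xs. \<pi> x = \<pi> x'"
    and cond_ii: "\<forall>x. T x \<in> N x"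
    and cond_iii: "\<forall>x. x \<notin> Xs \<longrightarrow> \<pi> (T x) \<ge> p powr \<nu> * \<pi> x"
  shows "(\<forall>h. balancing h \<and> irreducible_on Xs (restrict_kernel (Kh \<pi> N h) Xs) \<longrightarrow>
            Gap (Qh \<pi> N h) \<ge>
              kappa p \<alpha> \<nu> * h 1 /
              (3 * (real (card Xs) * p powr (\<alpha> - \<nu>) + 1) * real (card Xs) * (real (card Xs) - 1)
                 * expect \<pi> (Zh \<pi> N h)))
       \<and> (\<lambda>u::real. 1 + u) 1 \<ge> 1 \<and> (\<lambda>u::real. min 1 u) 1 \<ge> 1 \<and> (\<lambda>u::real. sqrt u) 1 \<ge> 1
       \<and> expect \<pi> (Zh \<pi> N (\<lambda>u. 1 + u)) \<le> 2 * p powr \<alpha>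
       \<and> expect \<pi> (Zh \<pi> N (\<lambda>u. min 1 u)) \<le> 2 * p powr (2 * \<alpha> - \<nu>) + (real (card Xs) - 1)
       \<and> expect \<pi> (Zh \<pi> N (\<lambda>u. sqrt u)) \<le>
           p powr (2 * \<alpha> - \<nu>) + 2 * p powr (\<alpha> - \<nu> / 2) + (real (card Xs) - 1)"
proof -
  interpret landscape \<pi> N p \<alpha> \<nu> Xs T
    using pi_pos pi_sum p_gt alpha_pos nu_gt N_sym N_irrefl N_card M_ge cond_i cond_ii cond_iii
    by unfold_locales blast+
  have "Gap (Qh \<pi> N h) \<ge> kappa p \<alpha> \<nu> * h 1 /
      (3 * (real (card Xs) * p powr (\<alpha> - \<nu>) + 1) * real (card Xs) * (real (card Xs) - 1)
        * expect \<pi> (Zh \<pi> N h))"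
    if "balancing h" and "irreducible_on Xs (restrict_kernel (Kh \<pi> N h) Xs)" for h
  proof -
    interpret balanced_chain \<pi> N p \<alpha> \<nu> Xs T h
      using N_irr that by unfold_locales auto
    show ?thesis by (rule Gap_Qh_ge)
  qed
  then show ?thesis
    using expect_Zh_one_plus_le expect_Zh_min_le expect_Zh_sqrt_le by auto
qed

end
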